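(* Let $G$ be a graph on $n$ vertices, where $n=20$ or $n=21$, with exactly $2n-1$ edges and maximum vertex degree at most four. Then $\mathcal{E}(G)<2(n-1)$.
   Context: All graphs are finite, simple and undirected. The energy $\mathcal{E}(G)$ of a graph $G$ is the sum of the absolute values of the eigenvalues of its adjacency matrix. *)

theory Defs
  imports "Jordan_Normal_Form.Char_Poly"
begin

definition simple_graph :: "nat \<Rightarrow> (nat \<Rightarrow> nat \<Rightarrow> bool) \<Rightarrow> bool" where
  "simple_graph n E \<longleftrightarrow>
     (\<forall>i<n. \<forall>j<n. E i j \<longrightarrow> E j i) \<and> (\<forall>i<n. \<not> E i i)"

definition graph_edges :: "nat \<Rightarrow> (nat \<Rightarrow> nat \<Rightarrow> bool) \<Rightarrow> nat set set" where
  "graph_edges n E = {{i, j} | i j. i < n \<and> j < n \<and> E i j}"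

definition degree :: "nat \<Rightarrow> (nat \<Rightarrow> nat \<Rightarrow> bool) \<Rightarrow> nat \<Rightarrow> nat" where
  "degree n E i = card {j. j < n \<and> E i j}"

definition adj_matrix :: "nat \<Rightarrow> (nat \<Rightarrow> nat \<Rightarrow> bool) \<Rightarrow> real mat" where
  "adj_matrix n E = mat n n (\<lambda>(i, j). if E i j then 1 else 0)"

definition graph_energy :: "nat \<Rightarrow> (nat \<Rightarrow> nat \<Rightarrow> bool) \<Rightarrow> real" where
  "graph_energy n E =
     (let p = char_poly (map_mat complex_of_real (adj_matrix n E)) in
      \<Sum>z\<in>{z. poly p z = 0}. real (order z p) * cmod z)"

end

theory Submission
  imports Defs "Jordan_Normal_Form.Schur_Decomposition"
begin

text \<open>
  The eigenvalues \<open>\<lambda>\<^sub>1, \<dots>, \<lambda>\<^sub>n\<close> of the adjacency matrix \<open>A\<close> are real (as \<open>A\<close> is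
  symmetric) and satisfy \<open>\<bar>\<lambda>\<^sub>i\<bar> \<le> 4\<close> (the maximum degree bounds every row sum). On
  \<open>[-4, 4]\<close> the function \<open>\<bar>t\<bar>\<close> lies below an even quartic \<open>a + b t\<^sup>2 - c t\<^sup>4\<close> with
  \<open>b, c > 0\<close>, so the energy is at most \<open>a n + b \<Sum> \<lambda>\<^sub>i\<^sup>2 - c \<Sum> \<lambda>\<^sub>i\<^sup>4\<close>. The power sums are
  traces of powers of \<open>A\<close>: \<open>\<Sum> \<lambda>\<^sub>i\<^sup>2 = tr A\<^sup>2 = \<Sum> d\<^sub>i = 4n - 2\<close> by the handshake lemma, and
  \<open>\<Sum> \<lambda>\<^sub>i\<^sup>4 = tr A\<^sup>4 = \<Sum>\<^sub>i\<^sub>j ((A\<^sup>2)\<^sub>i\<^sub>j)\<^sup>2 \<ge> 2 \<Sum> d\<^sub>i\<^sup>2 - \<Sum> d\<^sub>i\<close>, because the entries of \<open>A\<^sup>2\<close> are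
  natural numbers with the degrees on the diagonal and total sum \<open>\<Sum> d\<^sub>i\<^sup>2\<close>. Since
  \<open>(d - 3)(d - 4) \<ge> 0\<close> for integers, \<open>\<Sum> d\<^sub>i\<^sup>2 \<ge> 7 \<Sum> d\<^sub>i - 12 n\<close>, whence
  \<open>\<Sum> \<lambda>\<^sub>i\<^sup>4 \<ge> 28 n - 26\<close>; substituting these values gives \<open>\<E>(G) < 2(n - 1)\<close> for \<open>n = 20, 21\<close>.
\<close>

lemma order_prod_linear_factors:
  fixes as :: "'a::idom list"
  shows "Polynomial.order z (\<Prod>a\<leftarrow>as. [:- a, 1:]) = count_list as z"
proof (induction as)
  case (Cons a as)
  have "(\<Prod>a\<leftarrow>as. [:- a, 1:]) \<noteq> 0"
    by auto
  then have "Polynomial.order z ([:- a, 1:] * (\<Prod>a\<leftarrow>as. [:- a, 1:]))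
      = Polynomial.order z [:- a, 1:] + Polynomial.order z (\<Prod>a\<leftarrow>as. [:- a, 1:])"
    by (intro order_mult) (metis mult_eq_0_iff pCons_eq_0_iff one_neq_zero)
  then show ?case
    using Cons.IH by (simp add: order_linear')
qed simp

lemma roots_prod_linear_factors:
  fixes as :: "'a::idom list"
  shows "{z. poly (\<Prod>a\<leftarrow>as. [:- a, 1:]) z = 0} = set as"
  by (induction as) auto

lemma sum_list_map_eq_sum_of_nat_count:
  fixes f :: "'a \<Rightarrow> 'b::semiring_1"
  shows "(\<Sum>x\<leftarrow>xs. f x) = (\<Sum>x\<in>set xs. of_nat (count_list xs x) * f x)"
proof (induction xs)
  case (Cons y xs)
  have "(\<Sum>x\<in>set (y # xs). of_nat (count_list (y # xs) x) * f x)
      = (\<Sum>x\<in>insert y (set xs).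
          of_nat (count_list xs x) * f x + (if x = y then f x else 0))"
    by (intro sum.cong) (auto simp: algebra_simps)
  also have "\<dots> = (\<Sum>x\<in>insert y (set xs). of_nat (count_list xs x) * f x) + f y"
    by (simp add: sum.distrib)
  also have "\<dots> = (\<Sum>x\<in>set xs. of_nat (count_list xs x) * f x) + f y"
    by (cases "y \<in> set xs") (auto simp: insert_absorb)
  finally show ?case
    using Cons.IH by (simp add: add.commute)
qed simp

lemma graph_energy_eq_sum_list:
  assumes "char_poly (map_mat complex_of_real (adj_matrix n E)) = (\<Prod>a\<leftarrow>as. [:- a, 1:])"
  shows "graph_energy n E = (\<Sum>a\<leftarrow>as. cmod a)"
  unfolding graph_energy_def Let_def assms roots_prod_linear_factors order_prod_linear_factors
  by (rule sum_list_map_eq_sum_of_nat_count[symmetric])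

definition mat_trace :: "'a::semiring_0 mat \<Rightarrow> 'a" where
  "mat_trace A = (\<Sum>i<dim_row A. A $$ (i, i))"

lemma index_mult_mat_sum:
  assumes "A \<in> carrier_mat n m" "B \<in> carrier_mat m k" "i < n" "j < k"
  shows "(A * B) $$ (i, j) = (\<Sum>l<m. A $$ (i, l) * B $$ (l, j))"
  using assms by (auto simp: scalar_prod_def atLeast0LessThan intro!: sum.cong)

lemma mat_trace_mult_comm:
  fixes A B :: "'a::comm_semiring_0 mat"
  assumes "A \<in> carrier_mat n m" "B \<in> carrier_mat m n"
  shows "mat_trace (A * B) = mat_trace (B * A)"
proof -
  have "mat_trace (A * B) = (\<Sum>i<n. \<Sum>l<m. A $$ (i, l) * B $$ (l, i))"
    unfolding mat_trace_def using assms
    by (auto simp: index_mult_mat_sum[OF assms] simp del: index_mult_mat(1) intro!: sum.cong)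
  also have "\<dots> = (\<Sum>l<m. \<Sum>i<n. B $$ (l, i) * A $$ (i, l))"
    by (subst sum.swap) (simp add: mult.commute)
  also have "\<dots> = mat_trace (B * A)"
    unfolding mat_trace_def using assms
    by (auto simp: index_mult_mat_sum[OF assms(2,1)] simp del: index_mult_mat(1) intro!: sum.cong)
  finally show ?thesis .
qed

lemma mat_trace_similar_mat_wit:
  fixes A :: "'a::comm_ring_1 mat"
  assumes "similar_mat_wit A B P Q"
  shows "mat_trace A = mat_trace B"
proof -
  obtain n where carrier: "A \<in> carrier_mat n n" "B \<in> carrier_mat n n" "P \<in> carrier_mat n n"
      "Q \<in> carrier_mat n n" and QP: "Q * P = 1\<^sub>m n" and A: "A = P * B * Q"
    using assms unfolding similar_mat_wit_def Let_def by blast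
  have "mat_trace A = mat_trace (P * (B * Q))"
    using carrier by (simp add: A assoc_mult_mat[of P n n B n Q n])
  also have "\<dots> = mat_trace (B * Q * P)"
    using carrier by (intro mat_trace_mult_comm) auto
  also have "B * Q * P = B"
    using carrier by (simp add: assoc_mult_mat[of B n n Q n P n] QP)
  finally show ?thesis .
qed

lemma upper_triangular_mult:
  fixes A B :: "'a::semiring_0 mat"
  assumes A: "A \<in> carrier_mat n n" "upper_triangular A"
    and B: "B \<in> carrier_mat n n" "upper_triangular B"
  shows "upper_triangular (A * B)"
    and "i < n \<Longrightarrow> (A * B) $$ (i, i) = A $$ (i, i) * B $$ (i, i)"
proof -
  have zero: "A $$ (i, l) * B $$ (l, j) = 0" if "i < n" "l < n" "l < i \<or> j < l" for i j l
    using that upper_triangularD[OF A(2)] upper_triangularD[OF B(2)] A(1) B(1) by auto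
  show "upper_triangular (A * B)"
    using A B zero
    by (intro upper_triangularI)
       (auto simp: index_mult_mat_sum[OF A(1) B(1)] simp del: index_mult_mat(1)
             intro!: sum.neutral zero)
  assume i: "i < n"
  have "(A * B) $$ (i, i) = (\<Sum>l<n. A $$ (i, l) * B $$ (l, i))"
    by (rule index_mult_mat_sum[OF A(1) B(1) i i])
  also have "\<dots> = A $$ (i, i) * B $$ (i, i) + (\<Sum>l\<in>{..<n} - {i}. A $$ (i, l) * B $$ (l, i))"
    using i by (simp add: sum.remove)
  also have "(\<Sum>l\<in>{..<n} - {i}. A $$ (i, l) * B $$ (l, i)) = 0"
    using i by (intro sum.neutral ballI zero) auto
  finally show "(A * B) $$ (i, i) = A $$ (i, i) * B $$ (i, i)"
    by simp
qed

lemma upper_triangular_pow: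
  fixes A :: "'a::semiring_1 mat"
  assumes "A \<in> carrier_mat n n" "upper_triangular A"
  shows "upper_triangular (A ^\<^sub>m k)"
    and "i < n \<Longrightarrow> (A ^\<^sub>m k) $$ (i, i) = A $$ (i, i) ^ k"
proof -
  have "upper_triangular (A ^\<^sub>m k) \<and> (\<forall>i<n. (A ^\<^sub>m k) $$ (i, i) = A $$ (i, i) ^ k)"
  proof (induction k)
    case 0
    show ?case using assms by auto
  next
    case (Suc k)
    then show ?case
      using upper_triangular_mult[OF pow_carrier_mat[OF assms(1)] _ assms]
      by (simp add: power_commutes)
  qed
  then show "upper_triangular (A ^\<^sub>m k)" "i < n \<Longrightarrow> (A ^\<^sub>m k) $$ (i, i) = A $$ (i, i) ^ k"
    by auto
qed

lemma mat_trace_pow_eq_sum_list_power: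
  fixes A :: "complex mat"
  assumes A: "A \<in> carrier_mat n n" and char_poly: "char_poly A = (\<Prod>a\<leftarrow>as. [:- a, 1:])"
  shows "mat_trace (A ^\<^sub>m k) = (\<Sum>a\<leftarrow>as. a ^ k)"
proof -
  obtain B P Q where "schur_decomposition A as = (B, P, Q)"
    by (cases "schur_decomposition A as")
  with schur_decomposition[OF A char_poly] have sim: "similar_mat_wit A B P Q"
    and B: "upper_triangular B" "diag_mat B = as"
    by auto
  have B_carrier: "B \<in> carrier_mat n n"
    using similar_mat_witD2[OF A sim] by simp
  have "mat_trace (A ^\<^sub>m k) = mat_trace (B ^\<^sub>m k)"
    using similar_mat_wit_pow[OF sim] by (rule mat_trace_similar_mat_wit)
  also have "\<dots> = (\<Sum>i<n. B $$ (i, i) ^ k)"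
    unfolding mat_trace_def using upper_triangular_pow(2)[OF B_carrier B(1)] B_carrier by simp
  also have "\<dots> = (\<Sum>a\<leftarrow>as. a ^ k)"
    using B_carrier unfolding B(2)[symmetric] diag_mat_def
    by (simp add: sum_list_sum_nth atLeast0LessThan)
  finally show ?thesis .
qed

lemma eigenvalueE:
  fixes A :: "'a::comm_ring_1 mat"
  assumes A: "A \<in> carrier_mat n n" and "eigenvalue A l"
  obtains v m where "m < n" "v m \<noteq> 0"
    and "\<And>i. i < n \<Longrightarrow> (\<Sum>j<n. A $$ (i, j) * v j) = l * v i"
proof -
  obtain x where x: "x \<in> carrier_vec n" "x \<noteq> 0\<^sub>v n" "A *\<^sub>v x = l \<cdot>\<^sub>v x"
    using assms unfolding eigenvalue_def eigenvector_def by auto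
  then obtain m where "m < n" "x $ m \<noteq> 0"
    by (metis carrier_vecD eq_vecI index_zero_vec)
  moreover have "(\<Sum>j<n. A $$ (i, j) * x $ j) = l * x $ i" if "i < n" for i
  proof -
    have "(A *\<^sub>v x) $ i = (\<Sum>j<n. A $$ (i, j) * x $ j)"
      using A x(1) that by (auto simp: scalar_prod_def atLeast0LessThan intro!: sum.cong)
    then show ?thesis
      using x(1,3) that by simp
  qed
  ultimately show ?thesis
    by (rule that)
qed

lemma eigenvalue_norm_le_row_sum:
  fixes A :: "'a::real_normed_field mat"
  assumes A: "A \<in> carrier_mat n n" and "eigenvalue A l"
    and row_sum: "\<And>i. i < n \<Longrightarrow> (\<Sum>j<n. norm (A $$ (i, j))) \<le> r"
  shows "norm l \<le> r"
proof -
  obtain v m where "m < n" "v m \<noteq> 0"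
    and eigen: "\<And>i. i < n \<Longrightarrow> (\<Sum>j<n. A $$ (i, j) * v j) = l * v i"
    using eigenvalueE[OF assms(1,2)] by blast
  let ?norms = "(\<lambda>j. norm (v j)) ` {..<n}"
  have "Max ?norms \<in> ?norms"
    using \<open>m < n\<close> by (intro Max_in) auto
  then obtain i where i: "i < n" and i_max: "norm (v i) = Max ?norms"
    by auto
  have max: "norm (v j) \<le> norm (v i)" if "j < n" for j
    unfolding i_max using that by (intro Max_ge) auto
  have pos: "norm (v i) > 0"
    using max[OF \<open>m < n\<close>] \<open>v m \<noteq> 0\<close> by (meson zero_less_norm_iff less_le_trans)
  have "norm l * norm (v i) = norm (\<Sum>j<n. A $$ (i, j) * v j)"
    by (simp add: eigen[OF i] norm_mult)
  also have "\<dots> \<le> (\<Sum>j<n. norm (A $$ (i, j)) * norm (v j))"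
    by (rule norm_sum[THEN order_trans]) (simp add: norm_mult)
  also have "\<dots> \<le> (\<Sum>j<n. norm (A $$ (i, j)) * norm (v i))"
    by (intro sum_mono mult_left_mono max) auto
  also have "\<dots> \<le> r * norm (v i)"
    unfolding sum_distrib_right[symmetric] using row_sum[OF i] pos by simp
  finally show ?thesis
    using pos by simp
qed

lemma eigenvalue_real_if_hermitian:
  fixes A :: "complex mat"
  assumes A: "A \<in> carrier_mat n n" and "eigenvalue A l"
    and hermitian: "\<And>i j. i < n \<Longrightarrow> j < n \<Longrightarrow> A $$ (j, i) = cnj (A $$ (i, j))"
  shows "l \<in> \<real>"
proof -
  obtain v m where "m < n" "v m \<noteq> 0"
    and eigen: "\<And>i. i < n \<Longrightarrow> (\<Sum>j<n. A $$ (i, j) * v j) = l * v i"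
    using eigenvalueE[OF assms(1,2)] by blast
  have cnj_mult_eq_norm_square: "cnj z * z = of_real ((cmod z)\<^sup>2)" for z
    by (metis complex_norm_square mult.commute)
  define S where "S = (\<Sum>i<n. \<Sum>j<n. cnj (v i) * A $$ (i, j) * v j)"
  define N where "N = (\<Sum>i<n. (cmod (v i))\<^sup>2)"
  have "S = (\<Sum>i<n. cnj (v i) * (l * v i))"
    unfolding S_def by (simp add: eigen[symmetric] sum_distrib_left mult.assoc)
  also have "\<dots> = l * (\<Sum>i<n. cnj (v i) * v i)"
    by (simp add: sum_distrib_left mult_ac)
  also have "\<dots> = l * of_real N"
    unfolding N_def by (simp only: cnj_mult_eq_norm_square of_real_sum)
  finally have S: "S = l * of_real N" .
  have "cnj S = (\<Sum>i<n. \<Sum>j<n. cnj (v j) * cnj (A $$ (i, j)) * v i)"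
    unfolding S_def by (simp add: mult_ac)
  also have "\<dots> = (\<Sum>i<n. \<Sum>j<n. cnj (v j) * A $$ (j, i) * v i)"
    by (intro sum.cong refl) (subst hermitian, auto)
  also have "\<dots> = S"
    unfolding S_def by (rule sum.swap[symmetric])
  finally have "cnj l * of_real N = l * of_real N"
    unfolding S by simp
  moreover have "N > 0"
    unfolding N_def using \<open>m < n\<close> \<open>v m \<noteq> 0\<close>
    by (intro sum_pos2[of _ m]) auto
  ultimately have "cnj l = l"
    by (metis mult_cancel_right of_real_eq_0_iff less_irrefl)
  then show ?thesis
    by (simp add: Reals_cnj_iff)
qed

lemma mat_trace_of_real:
  assumes "A \<in> carrier_mat n n"
  shows "mat_trace (map_mat complex_of_real A) = complex_of_real (mat_trace A)"
  unfolding mat_trace_def of_real_sum using assms by (intro sum.cong) auto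

lemma real_symmetric_spectrum:
  fixes A :: "real mat"
  assumes A: "A \<in> carrier_mat n n"
    and symmetric: "\<And>i j. i < n \<Longrightarrow> j < n \<Longrightarrow> A $$ (i, j) = A $$ (j, i)"
  obtains ls where "length ls = n"
    and "char_poly (map_mat complex_of_real A) = (\<Prod>l\<leftarrow>ls. [:- complex_of_real l, 1:])"
    and "\<And>l. l \<in> set ls \<Longrightarrow> eigenvalue (map_mat complex_of_real A) (complex_of_real l)"
    and "\<And>k. mat_trace (A ^\<^sub>m k) = (\<Sum>l\<leftarrow>ls. l ^ k)"
proof -
  let ?A = "map_mat complex_of_real A"
  have A': "?A \<in> carrier_mat n n"
    using A by simp
  obtain as where char_poly: "char_poly ?A = (\<Prod>a\<leftarrow>as. [:- a, 1:])" and "length as = n"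
    using char_poly_factorized[OF A'] by blast
  have eigenvalue: "eigenvalue ?A a" if "a \<in> set as" for a
    unfolding eigenvalue_root_char_poly[OF A'] char_poly
    using that roots_prod_linear_factors by blast
  have "a \<in> \<real>" if "a \<in> set as" for a
    using A' eigenvalue[OF that] by (rule eigenvalue_real_if_hermitian) (use A symmetric in auto)
  then have as: "as = map complex_of_real (map Re as)"
    by (induction as) (auto simp: Reals_def)
  show ?thesis
  proof
    show "length (map Re as) = n"
      using \<open>length as = n\<close> by simp
    show "char_poly ?A = (\<Prod>l\<leftarrow>map Re as. [:- complex_of_real l, 1:])"
      using char_poly by (subst (asm) as) (simp add: o_def)
    show "eigenvalue ?A (complex_of_real l)" if "l \<in> set (map Re as)" for l
      using that eigenvalue by (subst (asm) (2) as) auto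
    show "mat_trace (A ^\<^sub>m k) = (\<Sum>l\<leftarrow>map Re as. l ^ k)" for k
    proof -
      have "complex_of_real (mat_trace (A ^\<^sub>m k)) = mat_trace (?A ^\<^sub>m k)"
        unfolding of_real_hom.mat_hom_pow[OF A, symmetric]
        by (rule mat_trace_of_real[OF pow_carrier_mat[OF A], symmetric])
      also have "\<dots> = (\<Sum>a\<leftarrow>as. a ^ k)"
        by (rule mat_trace_pow_eq_sum_list_power[OF A' char_poly])
      also have "\<dots> = complex_of_real (\<Sum>l\<leftarrow>map Re as. l ^ k)"
        by (subst as) (simp add: o_def flip: sum_list_of_real)
      finally show ?thesis
        by simp
    qed
  qed
qed

lemma simple_graph_sym:
  "simple_graph n E \<Longrightarrow> i < n \<Longrightarrow> j < n \<Longrightarrow> E i j \<longleftrightarrow> E j i"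
  unfolding simple_graph_def by blast

lemma simple_graph_irrefl: "simple_graph n E \<Longrightarrow> i < n \<Longrightarrow> \<not> E i i"
  unfolding simple_graph_def by blast

lemma handshake:
  assumes G: "simple_graph n E"
  shows "(\<Sum>i<n. degree n E i) = 2 * card (graph_edges n E)"
proof -
  define D where "D = {(i, j). i < n \<and> j < n \<and> E i j}"
  define ends :: "nat \<times> nat \<Rightarrow> nat set" where "ends = (\<lambda>(i, j). {i, j})"
  have finite_D: "finite D"
    unfolding D_def by (rule finite_subset[of _ "{..<n} \<times> {..<n}"]) auto
  have edges: "graph_edges n E = ends ` D"
    unfolding graph_edges_def D_def ends_def by auto
  have "D = Sigma {..<n} (\<lambda>i. {j. j < n \<and> E i j})"
    unfolding D_def by auto
  then have "(\<Sum>i<n. degree n E i) = card D"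
    unfolding degree_def by simp
  also have "\<dots> = (\<Sum>e\<in>graph_edges n E. card {d \<in> D. ends d = e})"
    using sum.group[of D "graph_edges n E" ends "\<lambda>_. 1::nat"] finite_D
    by (simp add: edges)
  also have "\<dots> = (\<Sum>e\<in>graph_edges n E. 2)"
  proof (rule sum.cong[OF refl])
    fix e assume "e \<in> graph_edges n E"
    then obtain i j where e: "e = {i, j}" "i < n" "j < n" "E i j"
      unfolding graph_edges_def by blast
    then have "i \<noteq> j"
      using simple_graph_irrefl[OF G] by auto
    moreover have "{d \<in> D. ends d = e} = {(i, j), (j, i)}"
      using e simple_graph_sym[OF G] unfolding D_def ends_def
      by (auto simp: doubleton_eq_iff)
    ultimately show "card {d \<in> D. ends d = e} = 2"
      by simp
  qed
  finally show ?thesis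
    by (simp add: mult.commute)
qed

lemma adj_matrix_carrier [simp]: "adj_matrix n E \<in> carrier_mat n n"
  by (simp add: adj_matrix_def)

lemma adj_matrix_dim [simp]: "dim_row (adj_matrix n E) = n" "dim_col (adj_matrix n E) = n"
  by (simp_all add: adj_matrix_def)

lemma adj_matrix_index [simp]:
  "i < n \<Longrightarrow> j < n \<Longrightarrow> adj_matrix n E $$ (i, j) = (if E i j then 1 else 0)"
  by (simp add: adj_matrix_def)

lemma adj_matrix_row_sum:
  assumes "i < n"
  shows "(\<Sum>j<n. adj_matrix n E $$ (i, j)) = real (degree n E i)"
proof -
  have "(\<Sum>j<n. adj_matrix n E $$ (i, j)) = real (card ({..<n} \<inter> {j. E i j}))"
    using assms by (simp add: sum.If_cases)
  also have "{..<n} \<inter> {j. E i j} = {j. j < n \<and> E i j}"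
    by auto
  finally show ?thesis
    unfolding degree_def .
qed

lemma adj_matrix_sq_index:
  assumes "i < n" "j < n"
  shows "(adj_matrix n E * adj_matrix n E) $$ (i, j) = real (card {k. k < n \<and> E i k \<and> E k j})"
proof -
  have "(adj_matrix n E * adj_matrix n E) $$ (i, j) = (\<Sum>k<n. if E i k \<and> E k j then 1 else 0)"
    unfolding index_mult_mat_sum[OF adj_matrix_carrier adj_matrix_carrier assms]
    using assms by (intro sum.cong) auto
  also have "\<dots> = real (card ({..<n} \<inter> {k. E i k \<and> E k j}))"
    by (simp add: sum.If_cases)
  also have "{..<n} \<inter> {k. E i k \<and> E k j} = {k. k < n \<and> E i k \<and> E k j}"
    by auto
  finally show ?thesis .
qed

lemma adj_matrix_sq_diag:
  assumes "simple_graph n E" "i < n"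
  shows "(adj_matrix n E * adj_matrix n E) $$ (i, i) = real (degree n E i)"
proof -
  have "{k. k < n \<and> E i k \<and> E k i} = {k. k < n \<and> E i k}"
    using simple_graph_sym[OF assms(1) assms(2)] by auto
  then show ?thesis
    using adj_matrix_sq_index[OF assms(2) assms(2)] unfolding degree_def by simp
qed

lemma adj_matrix_sq_sum:
  assumes G: "simple_graph n E"
  shows "(\<Sum>i<n. \<Sum>j<n. (adj_matrix n E * adj_matrix n E) $$ (i, j))
    = (\<Sum>k<n. real (degree n E k) ^ 2)"
proof -
  let ?A = "adj_matrix n E"
  have "(\<Sum>i<n. \<Sum>j<n. (?A * ?A) $$ (i, j))
      = (\<Sum>i<n. \<Sum>j<n. \<Sum>k<n. ?A $$ (i, k) * ?A $$ (k, j))"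
    by (intro sum.cong refl index_mult_mat_sum) auto
  also have "\<dots> = (\<Sum>k<n. (\<Sum>i<n. ?A $$ (k, i)) * (\<Sum>j<n. ?A $$ (k, j)))"
    by (subst sum.swap, subst (2) sum.swap)
       (auto simp: sum_product simple_graph_sym[OF G] intro!: sum.cong)
  also have "\<dots> = (\<Sum>k<n. real (degree n E k) ^ 2)"
    by (intro sum.cong refl) (simp add: adj_matrix_row_sum power2_eq_square del: adj_matrix_index)
  finally show ?thesis .
qed

lemma adj_matrix_pow4_eq:
  "adj_matrix n E ^\<^sub>m 4 = (adj_matrix n E * adj_matrix n E) * (adj_matrix n E * adj_matrix n E)"
proof -
  let ?A = "adj_matrix n E"
  have "?A ^\<^sub>m 4 = ?A * ?A * ?A * ?A"
    by (simp add: numeral_eq_Suc)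
  also have "\<dots> = (?A * ?A) * (?A * ?A)"
    by (rule assoc_mult_mat[of _ n n _ n _ n]) auto
  finally show ?thesis .
qed

lemma mat_trace_adj_matrix_pow2:
  assumes "simple_graph n E"
  shows "mat_trace (adj_matrix n E ^\<^sub>m 2) = (\<Sum>i<n. real (degree n E i))"
proof -
  have "adj_matrix n E ^\<^sub>m 2 = adj_matrix n E * adj_matrix n E"
    by (simp add: numeral_eq_Suc)
  then show ?thesis
    unfolding mat_trace_def using adj_matrix_sq_diag[OF assms] by (auto intro: sum.cong)
qed

lemma mat_trace_adj_matrix_pow4_ge:
  assumes G: "simple_graph n E"
  shows "2 * (\<Sum>i<n. real (degree n E i) ^ 2) - (\<Sum>i<n. real (degree n E i))
    \<le> mat_trace (adj_matrix n E ^\<^sub>m 4)"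
proof -
  let ?A = "adj_matrix n E"
  define c where "c i j = (?A * ?A) $$ (i, j)" for i j
  define d where "d i = real (degree n E i)" for i
  have "real m \<le> real m ^ 2" for m :: nat
    by (cases m) (auto simp: power2_eq_square)
  then have c_nat: "c i j \<le> c i j ^ 2" if "i < n" "j < n" for i j
    unfolding c_def adj_matrix_sq_index[OF that] .
  have c_sym: "c j i = c i j" if "i < n" "j < n" for i j
    unfolding c_def adj_matrix_sq_index[OF that] adj_matrix_sq_index[OF that(2,1)]
    using simple_graph_sym[OF G] that by metis
  have c_diag: "c i i = d i" if "i < n" for i
    unfolding c_def d_def using adj_matrix_sq_diag[OF G that] .
  have "mat_trace (?A ^\<^sub>m 4) = (\<Sum>i<n. \<Sum>j<n. c i j * c j i)"
    unfolding mat_trace_def adj_matrix_pow4_eq c_def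
    by (auto simp del: index_mult_mat(1) intro!: sum.cong index_mult_mat_sum)
  also have "\<dots> = (\<Sum>i<n. \<Sum>j<n. c i j ^ 2)"
    by (auto simp: c_sym power2_eq_square intro!: sum.cong)
  also have "\<dots> \<ge> (\<Sum>i<n. \<Sum>j<n. c i j + (if j = i then d i ^ 2 - d i else 0))"
    using c_nat c_diag by (intro sum_mono) (auto simp del: sum.delta)
  also have "(\<Sum>i<n. \<Sum>j<n. c i j + (if j = i then d i ^ 2 - d i else 0))
      = (\<Sum>i<n. d i ^ 2) + (\<Sum>i<n. d i ^ 2 - d i)"
    unfolding c_def d_def
    by (simp add: sum.distrib adj_matrix_sq_sum[OF G] del: index_mult_mat(1))
  finally show ?thesis
    unfolding d_def by (simp add: sum_subtractf)
qed

lemma adj_matrix_spectrum: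
  assumes G: "simple_graph n E" and degree: "\<And>i. i < n \<Longrightarrow> degree n E i \<le> \<Delta>"
  obtains ls where "length ls = n"
    and "graph_energy n E = (\<Sum>l\<leftarrow>ls. \<bar>l\<bar>)"
    and "\<And>l. l \<in> set ls \<Longrightarrow> \<bar>l\<bar> \<le> real \<Delta>"
    and "\<And>k. mat_trace (adj_matrix n E ^\<^sub>m k) = (\<Sum>l\<leftarrow>ls. l ^ k)"
proof -
  let ?A = "map_mat complex_of_real (adj_matrix n E)"
  obtain ls where "length ls = n"
    and char_poly: "char_poly ?A = (\<Prod>l\<leftarrow>ls. [:- complex_of_real l, 1:])"
    and eigenvalue: "\<And>l. l \<in> set ls \<Longrightarrow> eigenvalue ?A (complex_of_real l)"
    and "\<And>k. mat_trace (adj_matrix n E ^\<^sub>m k) = (\<Sum>l\<leftarrow>ls. l ^ k)"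
    by (rule real_symmetric_spectrum[OF adj_matrix_carrier[of n E]])
       (auto simp: simple_graph_sym[OF G])
  moreover have "graph_energy n E = (\<Sum>l\<leftarrow>ls. \<bar>l\<bar>)"
    using graph_energy_eq_sum_list[of n E "map complex_of_real ls"] char_poly
    by (simp add: o_def)
  moreover have "\<bar>l\<bar> \<le> real \<Delta>" if "l \<in> set ls" for l
  proof -
    have "norm (complex_of_real l) \<le> real \<Delta>"
    proof (rule eigenvalue_norm_le_row_sum[OF _ eigenvalue[OF that]])
      fix i assume "i < n"
      then show "(\<Sum>j<n. norm (?A $$ (i, j))) \<le> real \<Delta>"
        using adj_matrix_row_sum[of i n E] degree[of i] by simp
    qed simp
    then show ?thesis
      by simp
  qed
  ultimately show ?thesis
    using that by blast
qed

lemma Ints_square_ge_linear: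
  fixes x a :: "'a::linordered_idom"
  assumes "x \<in> \<int>" "a \<in> \<int>"
  shows "(2 * a + 1) * x - a * (a + 1) \<le> x\<^sup>2"
proof -
  obtain k where k: "x - a = of_int k"
    using assms by (metis Ints_cases Ints_diff)
  have "0 \<le> k * (k - 1)"
    by (cases "k \<le> 0") (auto simp: mult_nonpos_nonpos)
  then have "0 \<le> (x - a) * (x - a - 1)"
    unfolding k by (metis of_int_0_le_iff of_int_1 of_int_diff of_int_mult)
  then show ?thesis
    by (simp add: algebra_simps power2_eq_square)
qed

text \<open>The quartic touches \<open>\<bar>t\<bar>\<close> at \<open>t = \<plusminus>7/4\<close>: the difference is
  \<open>(\<bar>t\<bar> - 7/4)\<^sup>2 (3497/13440 - \<bar>t\<bar>/120 (\<bar>t\<bar> + 7/2))\<close>, nonnegative for \<open>\<bar>t\<bar> \<le> 4\<close>.\<close>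

lemma abs_le_quartic:
  fixes t :: real
  assumes "\<bar>t\<bar> \<le> 4"
  shows "\<bar>t\<bar> \<le> 24479/30720 + 2263/6720 * t\<^sup>2 - 1/120 * t ^ 4"
proof -
  define s where "s = \<bar>t\<bar>"
  have "s * s \<le> 16"
    using assms mult_mono[of s 4 s 4] unfolding s_def by simp
  then have "0 \<le> (s - 7/4)\<^sup>2 * (3497/13440 - s\<^sup>2 / 120 - 7 * s / 240)"
    using assms unfolding s_def by (simp add: power2_eq_square)
  also have "\<dots> = 24479/30720 + 2263/6720 * s\<^sup>2 - 1/120 * s ^ 4 - s"
    by (simp add: power2_eq_square power4_eq_xxxx field_simps)
  finally show ?thesis
    unfolding s_def by simp
qed

lemma sum_list_abs_le_moments:
  fixes ls :: "real list"
  assumes "\<And>l. l \<in> set ls \<Longrightarrow> \<bar>l\<bar> \<le> 4"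
  shows "(\<Sum>l\<leftarrow>ls. \<bar>l\<bar>)
    \<le> 24479/30720 * length ls + 2263/6720 * (\<Sum>l\<leftarrow>ls. l\<^sup>2)
      - 1/120 * (\<Sum>l\<leftarrow>ls. l ^ 4)"
proof -
  have "(\<Sum>l\<leftarrow>ls. \<bar>l\<bar>)
      \<le> (\<Sum>l\<leftarrow>ls. 24479/30720 + 2263/6720 * l\<^sup>2 - 1/120 * l ^ 4)"
    using assms abs_le_quartic by (intro sum_list_mono) auto
  also have "\<dots> = 24479/30720 * length ls + 2263/6720 * (\<Sum>l\<leftarrow>ls. l\<^sup>2)
      - 1/120 * (\<Sum>l\<leftarrow>ls. l ^ 4)"
    by (simp only: sum_list_subtractf sum_list_addf sum_list_const_mult sum_list_triv)
  finally show ?thesis .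
qed

theorem theorem3p2:
  fixes n :: nat and E :: "nat \<Rightarrow> nat \<Rightarrow> bool"
  assumes "n = 20 \<or> n = 21"
    and "simple_graph n E"
    and "card (graph_edges n E) = 2 * n - 1"
    and "\<forall>i<n. degree n E i \<le> 4"
  shows "graph_energy n E < 2 * (real n - 1)"
proof -
  note G = assms(2)
  let ?d = "\<lambda>i. real (degree n E i)"
  obtain ls where "length ls = n" and energy: "graph_energy n E = (\<Sum>l\<leftarrow>ls. \<bar>l\<bar>)"
    and bounded: "\<And>l. l \<in> set ls \<Longrightarrow> \<bar>l\<bar> \<le> 4"
    and moment: "\<And>k. mat_trace (adj_matrix n E ^\<^sub>m k) = (\<Sum>l\<leftarrow>ls. l ^ k)"
    using adj_matrix_spectrum[OF G, of 4] assms(4) by auto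
  have degree_sum: "(\<Sum>i<n. ?d i) = 4 * real n - 2"
    using handshake[OF G] assms(1,3) by (auto simp flip: of_nat_sum)
  have "(\<Sum>i<n. 7 * ?d i - 12) \<le> (\<Sum>i<n. ?d i ^ 2)"
    using Ints_square_ge_linear[of "?d i" 3 for i] by (intro sum_mono) simp
  then have fourth_moment: "28 * real n - 26 \<le> (\<Sum>l\<leftarrow>ls. l ^ 4)"
    using mat_trace_adj_matrix_pow4_ge[OF G] degree_sum
    by (simp add: moment sum_subtractf sum_distrib_left[symmetric])
  have "(\<Sum>l\<leftarrow>ls. l\<^sup>2) = 4 * real n - 2"
    using mat_trace_adj_matrix_pow2[OF G] degree_sum by (simp add: moment)
  then have "graph_energy n E
      \<le> 24479/30720 * real n + 2263/6720 * (4 * real n - 2) - 1/120 * (\<Sum>l\<leftarrow>ls. l ^ 4)"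
    using sum_list_abs_le_moments[of ls] bounded \<open>length ls = n\<close> energy by simp
  also have "\<dots>
      \<le> 24479/30720 * real n + 2263/6720 * (4 * real n - 2) - 1/120 * (28 * real n - 26)"
    using fourth_moment by simp
  also have "\<dots> < 2 * (real n - 1)"
    using assms(1) by auto
  finally show ?thesis .
qed

end
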